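(* Let $n\ge1$ and $\mathcal{N}=\mathbb{C}^{2^n}$. There is no subspace $\mathcal{M}\subseteq\mathcal{N}$ of dimension $2$ that separates $\mathcal{E}_{\mathrm{phase}}$ with at most $\alpha=\frac1{10}$ error.
   Context: $\mathcal{N}$ has standard basis $\{|x\rangle : x\in\{0,1\}^n\}$. For $S\subseteq\{0,1\}^n$ and $\theta\in[0,2\pi)$, $E_{S,\theta}$ is the linear operator with $E_{S,\theta}|x\rangle=e^{i\theta}|x\rangle$ if $x\in S$ and $E_{S,\theta}|x\rangle=|x\rangle$ otherwise. $\mathcal{E}_{\mathrm{phase}}=\{E_{S,\theta}: S\subseteq\{0,1\}^n,\ \theta\in\{0,\pi/4,\pi/2\}\}$. A subspace $\mathcal{M}$ separates a set $\mathcal{E}$ of operators with at most $\alpha$ error if for any $X,Y\in\mathcal{E}$ and any unit vectors $\phi_1,\phi_2\in\mathcal{M}$ with $\phi_1^*\phi_2=0$, $|\phi_1^*X^*Y\phi_2|\le\alpha$. *)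

theory Defs
  imports "HOL-Analysis.Analysis" "HOL-Library.Function_Algebras"
begin

text \<open>The space N = C^(2^n) with standard basis indexed by bit strings x in {0,1}^n,
  rendered as 'n \<Rightarrow> bool for a finite index type 'n with n = CARD('n) \<ge> 1.
  Vectors are functions from bit strings to complex numbers; operators are matrices.\<close>

type_synonym 'n qvec = "('n \<Rightarrow> bool) \<Rightarrow> complex"
type_synonym 'n qop = "('n \<Rightarrow> bool) \<Rightarrow> ('n \<Rightarrow> bool) \<Rightarrow> complex"

definition cscale :: "complex \<Rightarrow> 'n qvec \<Rightarrow> 'n qvec" where
  "cscale c v = (\<lambda>x. c * v x)"

definition apply_op :: "('n::finite) qop \<Rightarrow> 'n qvec \<Rightarrow> 'n qvec" where
  "apply_op A v = (\<lambda>x. \<Sum>y\<in>UNIV. A x y * v y)"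

definition adjoint_op :: "'n qop \<Rightarrow> 'n qop" where
  "adjoint_op A = (\<lambda>x y. cnj (A y x))"

definition cinner :: "('n::finite) qvec \<Rightarrow> 'n qvec \<Rightarrow> complex" where
  "cinner u v = (\<Sum>x\<in>UNIV. cnj (u x) * v x)"

definition unit_vec :: "('n::finite) qvec \<Rightarrow> bool" where
  "unit_vec v \<longleftrightarrow> sqrt (\<Sum>x\<in>UNIV. (cmod (v x))\<^sup>2) = 1"

definition E_op :: "('n \<Rightarrow> bool) set \<Rightarrow> real \<Rightarrow> 'n qop" where
  "E_op S \<theta> = (\<lambda>x y. if x = y then (if x \<in> S then exp (\<i> * complex_of_real \<theta>) else 1) else 0)"

definition E_phase :: "'n qop set" where
  "E_phase = {E_op S \<theta> | S \<theta>. \<theta> \<in> {0, pi/4, pi/2}}"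

definition separates :: "('n::finite) qvec set \<Rightarrow> 'n qop set \<Rightarrow> real \<Rightarrow> bool" where
  "separates M \<E> \<alpha> \<longleftrightarrow>
     (\<forall>X\<in>\<E>. \<forall>Y\<in>\<E>. \<forall>\<phi>1\<in>M. \<forall>\<phi>2\<in>M.
        unit_vec \<phi>1 \<longrightarrow> unit_vec \<phi>2 \<longrightarrow> cinner \<phi>1 \<phi>2 = 0 \<longrightarrow>
        cmod (cinner \<phi>1 (apply_op (adjoint_op X) (apply_op Y \<phi>2))) \<le> \<alpha>)"

end

theory Submission
  imports Defs
begin

text \<open>Let \<open>p, q\<close> be orthonormal in \<open>M\<close>. Separating the identity from the phase \<open>E_{S,\<pi>/2}\<close>
  bounds every partial sum \<open>\<Sum>\<^sub>x\<^sub>\<in>\<^sub>S p\<^sup>*(x) q(x)\<close> by \<open>\<alpha>/\<surd>2\<close>, hence the \<open>\<ell>\<^sub>1\<close>-norms of its real and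
  imaginary parts by \<open>\<surd>2 \<alpha>\<close>. The rotated pair \<open>(p \<plusminus> q)/\<surd>2\<close> is again orthonormal in \<open>M\<close>, and the
  real part of its pointwise product is \<open>(|p|\<^sup>2 - |q|\<^sup>2)/2\<close>, so also \<open>\<Sum> ||p|\<^sup>2 - |q|\<^sup>2| \<le> 2\<surd>2 \<alpha>\<close>.
  Pointwise \<open>|p|\<^sup>2 + |q|\<^sup>2 \<le> ||p|\<^sup>2 - |q|\<^sup>2| + 2|p||q|\<close>, and summing gives \<open>2 \<le> 6\<surd>2 \<alpha>\<close>,
  which fails for \<open>\<alpha> = 1/10\<close>.\<close>

interpretation cs: vector_space cscale
  by unfold_locales (auto simp: cscale_def fun_eq_iff algebra_simps)

definition sq_norm :: "('n::finite) qvec \<Rightarrow> real" where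
  "sq_norm v = (\<Sum>x\<in>UNIV. (cmod (v x))\<^sup>2)"

lemma cinner_add_left: "cinner (u + v) w = cinner u w + cinner v w"
  by (simp add: cinner_def sum.distrib algebra_simps)

lemma cinner_add_right: "cinner w (u + v) = cinner w u + cinner w v"
  by (simp add: cinner_def sum.distrib algebra_simps)

lemma cinner_diff_left: "cinner (u - v) w = cinner u w - cinner v w"
  by (simp add: cinner_def sum_subtractf algebra_simps)

lemma cinner_diff_right: "cinner w (u - v) = cinner w u - cinner w v"
  by (simp add: cinner_def sum_subtractf algebra_simps)

lemma cinner_scale_left: "cinner (cscale c u) w = cnj c * cinner u w"
  by (simp add: cinner_def cscale_def sum_distrib_left algebra_simps)

lemma cinner_scale_right: "cinner w (cscale c u) = c * cinner w u"
  by (simp add: cinner_def cscale_def sum_distrib_left algebra_simps)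

lemma cinner_commute: "cinner v u = cnj (cinner u v)"
  by (simp add: cinner_def algebra_simps)

lemma cinner_self_eq_sq_norm: "cinner v v = of_real (sq_norm v)"
proof -
  have "cinner v v = (\<Sum>x\<in>UNIV. of_real ((cmod (v x))\<^sup>2))"
    unfolding cinner_def by (intro sum.cong refl) (subst complex_norm_square, simp add: mult.commute)
  then show ?thesis
    unfolding sq_norm_def of_real_sum .
qed

lemma unit_vec_iff_sq_norm: "unit_vec v \<longleftrightarrow> sq_norm v = 1"
  unfolding unit_vec_def sq_norm_def by auto

lemma unit_vec_iff_cinner: "unit_vec v \<longleftrightarrow> cinner v v = 1"
  unfolding unit_vec_iff_sq_norm cinner_self_eq_sq_norm by simp

lemma sq_norm_pos:
  assumes "(v::('n::finite) qvec) \<noteq> 0"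
  shows "sq_norm v > 0"
proof -
  obtain y where "v y \<noteq> 0"
    using assms by (auto simp: fun_eq_iff)
  then have "0 < (cmod (v y))\<^sup>2" by simp
  also have "\<dots> \<le> sq_norm v"
    unfolding sq_norm_def by (rule member_le_sum) auto
  finally show ?thesis .
qed

lemma unit_vec_normalize:
  assumes "(v::('n::finite) qvec) \<noteq> 0"
  shows "unit_vec (cscale (of_real (1 / sqrt (sq_norm v))) v)"
proof -
  have pos: "sq_norm v > 0"
    using sq_norm_pos[OF assms] .
  have "cinner (cscale c v) (cscale c v) = cnj c * c * cinner v v" for c
    by (simp only: cinner_scale_left cinner_scale_right mult.assoc mult.left_commute)
  then have "cinner (cscale (of_real (1 / sqrt (sq_norm v))) v) (cscale (of_real (1 / sqrt (sq_norm v))) v)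
      = of_real (1 / sqrt (sq_norm v) * (1 / sqrt (sq_norm v)) * sq_norm v)"
    by (simp only: cinner_self_eq_sq_norm complex_cnj_complex_of_real of_real_mult)
  also have "\<dots> = 1"
    using pos by (simp add: field_simps)
  finally show ?thesis
    unfolding unit_vec_iff_cinner .
qed

lemma subspace_orthonormal_pair:
  assumes sub: "cs.subspace (M :: ('n::finite) qvec set)" and dim: "2 \<le> cs.dim M"
  obtains p q where "p \<in> M" "q \<in> M" "unit_vec p" "unit_vec q" "cinner p q = 0"
proof -
  obtain B where B: "B \<subseteq> M" "cs.independent B" "2 \<le> card B"
    using cs.basis_exists[of M] dim by metis
  then obtain a b where ab: "a \<in> B" "b \<in> B" "a \<noteq> b"
    by (metis One_nat_def card.infinite card_le_Suc0_iff_eq not_less_eq_eq numeral_2_eq_2 zero_le)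
  have aM: "a \<in> M" and bM: "b \<in> M"
    using B ab by auto
  have b0: "b \<noteq> 0"
    using B(2) ab cs.dependent_zero by blast
  have a_indep: "a \<notin> cs.span {b}"
    using ab cs.dependent_def B(2) cs.span_mono[of "{b}" "B - {a}"] by blast
  define p where "p = cscale (of_real (1 / sqrt (sq_norm b))) b"
  have p: "p \<in> M" "unit_vec p"
    unfolding p_def using cs.subspace_scale[OF sub bM] unit_vec_normalize[OF b0] by auto
  define w where "w = a - cscale (cinner p a) p"
  have "w \<in> M"
    unfolding w_def by (rule cs.subspace_diff[OF sub aM cs.subspace_scale[OF sub p(1)]])
  have "w \<noteq> 0"
  proof
    assume "w = 0"
    then have "a = cscale (cinner p a * of_real (1 / sqrt (sq_norm b))) b"
      by (auto simp: fun_eq_iff w_def p_def cscale_def)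
    then have "a \<in> cs.span {b}"
      by (metis cs.span_base cs.span_scale insertI1)
    with a_indep show False ..
  qed
  have "cinner p w = 0"
    using p(2) unfolding w_def unit_vec_iff_cinner by (simp add: cinner_diff_right cinner_scale_right)
  show thesis
  proof
    show "p \<in> M" "unit_vec p" by (fact p)+
    show "cscale (of_real (1 / sqrt (sq_norm w))) w \<in> M"
      by (rule cs.subspace_scale[OF sub \<open>w \<in> M\<close>])
    show "unit_vec (cscale (of_real (1 / sqrt (sq_norm w))) w)"
      by (rule unit_vec_normalize[OF \<open>w \<noteq> 0\<close>])
    show "cinner p (cscale (of_real (1 / sqrt (sq_norm w))) w) = 0"
      by (simp add: cinner_scale_right \<open>cinner p w = 0\<close>)
  qed
qed

lemma orthonormal_pair_rotate:
  assumes "unit_vec p" "unit_vec q" "cinner p q = 0"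
  shows "unit_vec (cscale (of_real (1 / sqrt 2)) (p + q))"
    and "unit_vec (cscale (of_real (1 / sqrt 2)) (p - q))"
    and "cinner (cscale (of_real (1 / sqrt 2)) (p + q)) (cscale (of_real (1 / sqrt 2)) (p - q)) = 0"
proof -
  have pp: "cinner p p = 1" and qq: "cinner q q = 1"
    using assms(1,2) unfolding unit_vec_iff_cinner by auto
  have pq: "cinner p q = 0" and qp: "cinner q p = 0"
    using assms(3) cinner_commute[of q p] by auto
  have half: "cnj (of_real (1 / sqrt 2)) * of_real (1 / sqrt 2) = (1 / 2 :: complex)"
    by (simp flip: of_real_mult)
  have scale: "cinner (cscale c u) (cscale c v) = cnj c * c * cinner u v" for c u v
    by (simp only: cinner_scale_left cinner_scale_right mult.assoc mult.left_commute)
  show "unit_vec (cscale (of_real (1 / sqrt 2)) (p + q))"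
    "unit_vec (cscale (of_real (1 / sqrt 2)) (p - q))"
    "cinner (cscale (of_real (1 / sqrt 2)) (p + q)) (cscale (of_real (1 / sqrt 2)) (p - q)) = 0"
    unfolding unit_vec_iff_cinner scale half
    by (simp_all add: cinner_add_left cinner_add_right cinner_diff_left cinner_diff_right pp qq pq qp)
qed

lemma exp_i_pi_half: "exp (\<i> * complex_of_real (pi / 2)) = \<i>"
  using cis_conv_exp[of "pi / 2"] cis_pi_half by simp

text \<open>Only the pair \<open>X = E_{\<emptyset>,0} = id\<close>, \<open>Y = E_{S,\<pi>/2}\<close> is used: then
  \<open>p\<^sup>*X\<^sup>*Y q = p\<^sup>*q + (\<i> - 1) \<Sum>\<^sub>x\<^sub>\<in>\<^sub>S p\<^sup>*(x) q(x)\<close> and \<open>|\<i> - 1| = \<surd>2\<close>.\<close>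
lemma separates_phase_partial_sum_bound:
  fixes M :: "('n::finite) qvec set"
  assumes sep: "separates M E_phase \<alpha>" and "p \<in> M" "q \<in> M" "unit_vec p" "unit_vec q"
    and orth: "cinner p q = 0"
  shows "sqrt 2 * cmod (\<Sum>x\<in>S. cnj (p x) * q x) \<le> \<alpha>"
proof -
  have "E_op {} 0 \<in> (E_phase :: 'n qop set)" "E_op S (pi / 2) \<in> (E_phase :: 'n qop set)"
    unfolding E_phase_def by blast+
  then have bound: "cmod (cinner p (apply_op (adjoint_op (E_op {} 0)) (apply_op (E_op S (pi / 2)) q))) \<le> \<alpha>"
    using sep assms unfolding separates_def by blast
  have "apply_op (adjoint_op (E_op {} 0)) w = w" for w :: "'n qvec"
    by (rule ext) (simp add: apply_op_def adjoint_op_def E_op_def if_distrib[of cnj]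
        if_distrib[of "\<lambda>a. a * _"] cong: if_cong)
  moreover have "apply_op (E_op S (pi / 2)) q = (\<lambda>x. (1 + (if x \<in> S then \<i> - 1 else 0)) * q x)"
    by (rule ext) (simp add: apply_op_def E_op_def exp_i_pi_half[simplified]
        if_distrib[of "\<lambda>a. a * _"] cong: if_cong)
  moreover have "cinner p (\<lambda>x. (1 + (if x \<in> S then \<i> - 1 else 0)) * q x)
      = cinner p q + (\<Sum>x\<in>UNIV. if x \<in> S then (\<i> - 1) * (cnj (p x) * q x) else 0)"
    unfolding cinner_def sum.distrib[symmetric] by (rule sum.cong) (auto simp: algebra_simps)
  moreover have "\<dots> = (\<i> - 1) * (\<Sum>x\<in>S. cnj (p x) * q x)"
    by (simp add: orth sum.If_cases sum_distrib_left)
  moreover have "cmod (\<i> - 1) = sqrt 2"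
    by (simp add: cmod_def)
  ultimately show ?thesis
    using bound by (simp add: norm_mult)
qed

lemma sum_abs_le_partial_sum_bound:
  fixes g :: "'a \<Rightarrow> real"
  assumes "finite A" and bound: "\<And>S. S \<subseteq> A \<Longrightarrow> \<bar>\<Sum>x\<in>S. g x\<bar> \<le> c"
  shows "(\<Sum>x\<in>A. \<bar>g x\<bar>) \<le> 2 * c"
proof -
  define P where "P = {x\<in>A. g x \<ge> 0}"
  have "(\<Sum>x\<in>A. \<bar>g x\<bar>) = (\<Sum>x\<in>P. \<bar>g x\<bar>) + (\<Sum>x\<in>A - P. \<bar>g x\<bar>)"
    using \<open>finite A\<close> by (simp add: P_def sum.subset_diff[of P A])
  also have "\<dots> = (\<Sum>x\<in>P. g x) + (\<Sum>x\<in>A - P. - g x)"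
    by (intro arg_cong2[where f = "(+)"] sum.cong) (auto simp: P_def)
  also have "\<dots> = (\<Sum>x\<in>P. g x) - (\<Sum>x\<in>A - P. g x)"
    by (simp add: sum_negf)
  also have "\<dots> \<le> 2 * c"
    using bound[of P] bound[of "A - P"] by (auto simp: P_def)
  finally show ?thesis .
qed

lemma sq_cmod_add_le:
  "(cmod a)\<^sup>2 + (cmod b)\<^sup>2 \<le> \<bar>(cmod a)\<^sup>2 - (cmod b)\<^sup>2\<bar> + 2 * (\<bar>Re (cnj a * b)\<bar> + \<bar>Im (cnj a * b)\<bar>)"
proof -
  have "(cmod a)\<^sup>2 + (cmod b)\<^sup>2 \<le> \<bar>(cmod a)\<^sup>2 - (cmod b)\<^sup>2\<bar> + 2 * (cmod a * cmod b)"
    using norm_ge_zero[of a] norm_ge_zero[of b]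
    by (smt (verit, del_insts) mult.commute mult_right_mono power2_eq_square)
  moreover have "cmod a * cmod b \<le> \<bar>Re (cnj a * b)\<bar> + \<bar>Im (cnj a * b)\<bar>"
    using cmod_le[of "cnj a * b"] by (simp add: norm_mult)
  ultimately show ?thesis by argo
qed

lemma Re_cnj_rotate_mult:
  "2 * Re (cnj (of_real (1 / sqrt 2) * (a + b)) * (of_real (1 / sqrt 2) * (a - b)))
    = (cmod a)\<^sup>2 - (cmod b)\<^sup>2"
proof -
  have "cnj (of_real (1 / sqrt 2) * (a + b)) * (of_real (1 / sqrt 2) * (a - b))
      = of_real (1 / 2) * (cnj (a + b) * (a - b))"
    by (simp add: field_simps flip: of_real_mult)
  moreover have "Re (cnj (a + b) * (a - b)) = (cmod a)\<^sup>2 - (cmod b)\<^sup>2"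
    unfolding cmod_power2 by (simp add: algebra_simps power2_eq_square)
  ultimately show ?thesis
    by simp
qed

lemma unit_pair_partial_sums_bound:
  fixes p q :: "('n::finite) qvec"
  assumes "unit_vec p" "unit_vec q"
    and cross: "\<And>S. cmod (\<Sum>x\<in>S. cnj (p x) * q x) \<le> c"
    and diff: "\<And>S. \<bar>\<Sum>x\<in>S. (cmod (p x))\<^sup>2 - (cmod (q x))\<^sup>2\<bar> \<le> d"
  shows "1 \<le> d + 4 * c"
proof -
  have re: "(\<Sum>x\<in>UNIV. \<bar>Re (cnj (p x) * q x)\<bar>) \<le> 2 * c"
    using order_trans[OF abs_Re_le_cmod cross]
    by (intro sum_abs_le_partial_sum_bound) (simp_all only: Re_sum finite)
  have im: "(\<Sum>x\<in>UNIV. \<bar>Im (cnj (p x) * q x)\<bar>) \<le> 2 * c"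
    using order_trans[OF abs_Im_le_cmod cross]
    by (intro sum_abs_le_partial_sum_bound) (simp_all only: Im_sum finite)
  have df: "(\<Sum>x\<in>UNIV. \<bar>(cmod (p x))\<^sup>2 - (cmod (q x))\<^sup>2\<bar>) \<le> 2 * d"
    by (rule sum_abs_le_partial_sum_bound) (auto intro: diff)
  have "2 = (\<Sum>x\<in>UNIV. (cmod (p x))\<^sup>2 + (cmod (q x))\<^sup>2)"
    using assms(1,2) unfolding unit_vec_iff_sq_norm sq_norm_def by (simp add: sum.distrib)
  also have "\<dots> \<le> (\<Sum>x\<in>UNIV. \<bar>(cmod (p x))\<^sup>2 - (cmod (q x))\<^sup>2\<bar>
      + 2 * (\<bar>Re (cnj (p x) * q x)\<bar> + \<bar>Im (cnj (p x) * q x)\<bar>))"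
    by (rule sum_mono) (rule sq_cmod_add_le)
  also have "\<dots> = (\<Sum>x\<in>UNIV. \<bar>(cmod (p x))\<^sup>2 - (cmod (q x))\<^sup>2\<bar>)
      + 2 * ((\<Sum>x\<in>UNIV. \<bar>Re (cnj (p x) * q x)\<bar>) + (\<Sum>x\<in>UNIV. \<bar>Im (cnj (p x) * q x)\<bar>))"
    by (simp add: sum.distrib sum_distrib_left)
  finally show ?thesis
    using re im df by argo
qed

lemma separates_phase_partial_sum_sq_diff_bound:
  fixes M :: "('n::finite) qvec set"
  assumes sep: "separates M E_phase \<alpha>" and sub: "cs.subspace M"
    and pq: "p \<in> M" "q \<in> M" "unit_vec p" "unit_vec q" "cinner p q = 0"
  shows "sqrt 2 * \<bar>\<Sum>x\<in>S. (cmod (p x))\<^sup>2 - (cmod (q x))\<^sup>2\<bar> \<le> 2 * \<alpha>"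
proof -
  define r where "r = cscale (of_real (1 / sqrt 2)) (p + q)"
  define s where "s = cscale (of_real (1 / sqrt 2)) (p - q)"
  have rs: "r \<in> M" "s \<in> M" "unit_vec r" "unit_vec s" "cinner r s = 0"
    unfolding r_def s_def using orthonormal_pair_rotate[OF pq(3-5)]
    by (auto intro: cs.subspace_scale[OF sub] cs.subspace_add[OF sub] cs.subspace_diff[OF sub] pq)
  let ?z = "\<Sum>x\<in>S. cnj (r x) * s x"
  have "(\<Sum>x\<in>S. (cmod (p x))\<^sup>2 - (cmod (q x))\<^sup>2) = 2 * Re ?z"
    unfolding Re_sum sum_distrib_left r_def s_def cscale_def plus_fun_apply minus_apply
    by (simp only: Re_cnj_rotate_mult)
  moreover have "sqrt 2 * \<bar>Re ?z\<bar> \<le> sqrt 2 * cmod ?z"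
    by (rule mult_left_mono[OF abs_Re_le_cmod]) simp
  ultimately show ?thesis
    using separates_phase_partial_sum_bound[OF sep rs, of S] by (simp only: abs_mult)
qed

theorem theorem4:
  shows "\<not> (\<exists>M :: ('n::finite) qvec set.
            module.subspace cscale M \<and> vector_space.dim cscale M = 2 \<and>
            separates M E_phase (1/10))"
proof
  assume "\<exists>M :: ('n::finite) qvec set.
            module.subspace cscale M \<and> vector_space.dim cscale M = 2 \<and>
            separates M E_phase (1/10)"
  then obtain M :: "'n qvec set" where sub: "cs.subspace M" and dim: "cs.dim M = 2"
    and sep: "separates M E_phase (1/10)" by blast
  obtain p q where pq: "p \<in> M" "q \<in> M" "unit_vec p" "unit_vec q" "cinner p q = 0"
    using subspace_orthonormal_pair[OF sub] dim by auto
  have "cmod (\<Sum>x\<in>S. cnj (p x) * q x) \<le> 1/10 / sqrt 2" for S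
    using separates_phase_partial_sum_bound[OF sep pq] by (simp add: field_simps)
  moreover have "\<bar>\<Sum>x\<in>S. (cmod (p x))\<^sup>2 - (cmod (q x))\<^sup>2\<bar> \<le> 2 * (1/10 / sqrt 2)" for S
    using separates_phase_partial_sum_sq_diff_bound[OF sep sub pq] by (simp add: field_simps)
  ultimately have "1 \<le> 6 * (1/10 / sqrt 2)"
    using unit_pair_partial_sums_bound[OF pq(3,4)] by fastforce
  moreover have "1 \<le> sqrt (2 :: real)"
    by simp
  ultimately show False
    by (simp add: field_simps)
qed

end
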